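(* Let $\mathcal{G}$ be a finite tree and let $i,j$ be adjacent nodes, with $d_i$ the degree of $i$ in $\mathcal{G}$. Let $\mathcal{G}_i$ be the connected component containing $i$ of the graph obtained from $\mathcal{G}$ by deleting the edge $(i,j)$, with edge set $\mathcal{E}(\mathcal{G}_i)$. Then the access time of the begrudgingly backtracking random walk from $i$ to $j$ is $$\tilde{\mathtt{t}}(i,j)=1+2|\mathcal{E}(\mathcal{G}_i)|\cdot\frac{d_i-1}{d_i}.$$
   Context: Begrudgingly backtracking random walk (BBRW) on $\mathcal{G}$: $x_1$ is uniform on the neighbors of $x_0$; for $n\ge0$, given $x_n=u,x_{n+1}=v$, $x_{n+2}$ is uniform on $\mathcal{N}(v)\setminus\{u\}$ if this set is nonempty, and $x_{n+2}=u$ otherwise. For a node $k$, $T_k=\min\{n\ge0:x_n=k\}$ and the access time is $\tilde{\mathtt{t}}(i,k)=\mathbb{E}[T_k\mid x_0=i]$. *)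

theory Defs
  imports "HOL-Analysis.Analysis" "HOL-Library.Extended_Nonnegative_Real"
begin

definition graph :: "'a set \<Rightarrow> 'a set set \<Rightarrow> bool" where
  "graph V E \<longleftrightarrow> finite V \<and> (\<forall>e\<in>E. e \<subseteq> V \<and> card e = 2)"

definition nbrs :: "'a set set \<Rightarrow> 'a \<Rightarrow> 'a set" where
  "nbrs E v = {u. {u, v} \<in> E}"

definition degree :: "'a set set \<Rightarrow> 'a \<Rightarrow> nat" where
  "degree E v = card (nbrs E v)"

definition is_walk :: "'a set set \<Rightarrow> 'a list \<Rightarrow> bool" where
  "is_walk E xs \<longleftrightarrow> xs \<noteq> [] \<and> (\<forall>m. Suc m < length xs \<longrightarrow> {xs ! m, xs ! Suc m} \<in> E)"

definition reachable :: "'a set set \<Rightarrow> 'a \<Rightarrow> 'a \<Rightarrow> bool" where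
  "reachable E u v \<longleftrightarrow> (\<exists>xs. is_walk E xs \<and> hd xs = u \<and> last xs = v)"

definition connected_graph :: "'a set \<Rightarrow> 'a set set \<Rightarrow> bool" where
  "connected_graph V E \<longleftrightarrow> (\<forall>u\<in>V. \<forall>v\<in>V. reachable E u v)"

definition is_cycle :: "'a set set \<Rightarrow> 'a list \<Rightarrow> bool" where
  "is_cycle E xs \<longleftrightarrow> is_walk E xs \<and> distinct xs \<and> length xs \<ge> 3 \<and> {last xs, hd xs} \<in> E"

definition tree :: "'a set \<Rightarrow> 'a set set \<Rightarrow> bool" where
  "tree V E \<longleftrightarrow> graph V E \<and> V \<noteq> {} \<and> connected_graph V E \<and> \<not> (\<exists>xs. is_cycle E xs)"

definition comp_vertices :: "'a set \<Rightarrow> 'a set set \<Rightarrow> 'a \<Rightarrow> 'a \<Rightarrow> 'a set" where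
  "comp_vertices V E i j = {v\<in>V. reachable (E - {{i, j}}) i v}"

definition comp_edges :: "'a set \<Rightarrow> 'a set set \<Rightarrow> 'a \<Rightarrow> 'a \<Rightarrow> 'a set set" where
  "comp_edges V E i j = {e \<in> E - {{i, j}}. e \<subseteq> comp_vertices V E i j}"

text \<open>Probability that x_1 = w given x_0 = v: uniform on the neighbours of v.\<close>
definition first_step :: "'a set set \<Rightarrow> 'a \<Rightarrow> 'a \<Rightarrow> real" where
  "first_step E v w = (if w \<in> nbrs E v then 1 / real (card (nbrs E v)) else 0)"

text \<open>Probability that x_{n+2} = w given x_n = u, x_{n+1} = v.\<close>
definition bb_step :: "'a set set \<Rightarrow> 'a \<Rightarrow> 'a \<Rightarrow> 'a \<Rightarrow> real" where
  "bb_step E u v w =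
     (if nbrs E v - {u} \<noteq> {}
      then (if w \<in> nbrs E v - {u} then 1 / real (card (nbrs E v - {u})) else 0)
      else (if w = u then 1 else 0))"

text \<open>Probability of the trajectory prefix x_0 ... x_n = xs, given x_0 = xs!0.\<close>
definition path_prob :: "'a set set \<Rightarrow> 'a list \<Rightarrow> real" where
  "path_prob E xs =
     (if length xs \<ge> 2 then first_step E (xs ! 0) (xs ! 1) else 1) *
     (\<Prod>m<length xs - 2. bb_step E (xs ! m) (xs ! Suc m) (xs ! Suc (Suc m)))"

text \<open>P(T_k > n | x_0 = i): total probability of prefixes x_0..x_n avoiding k.\<close>
definition tail_prob :: "'a set \<Rightarrow> 'a set set \<Rightarrow> 'a \<Rightarrow> 'a \<Rightarrow> nat \<Rightarrow> real" where
  "tail_prob V E i k n =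
     (\<Sum>xs\<in>{xs. length xs = Suc n \<and> xs ! 0 = i \<and> set xs \<subseteq> V \<and> k \<notin> set xs}. path_prob E xs)"

text \<open>Access time E[T_k | x_0 = i] = sum over n of P(T_k > n), as an extended
  nonnegative real (infinite if T_k is infinite with positive probability).\<close>
definition access_time :: "'a set \<Rightarrow> 'a set set \<Rightarrow> 'a \<Rightarrow> 'a \<Rightarrow> ennreal" where
  "access_time V E i k = (\<Sum>n. ennreal (tail_prob V E i k n))"

end

theory Submission
  imports Defs
begin

text \<open>
  Root the tree at j and view the walk as a Markov chain on states (u, v), "at v, coming from u";
  without loops, the first step from i is a begrudging step from the state (i, i). The access
  time is the expected number of steps until the root is hit, and every bounded nonnegative
  solution h of the first-step equations h(u, v) = 1 + sum_w P((u, v) \<rightarrow> (v, w)) h(v, w) on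
  the states off the root equals it: unfolding the equations N times leaves a remainder of at
  most (max h) P(T > N). So it suffices to exhibit a solution. Entering v from its parent, the
  walk is back at the parent after 2 m(v) + 1 steps on average, m(v) the number of descendants
  of v; entering v from one of its k children c, it moves on to the parent of v after
  1 + (2 k m(v) - 2 (m(c) + 1)) / (k + 1) steps, the solution of the first-step equations among
  the siblings; from there it climbs to the root. If i is a child of the root, then m(i) is the
  number of edges of the component of i and i has d_i - 1 children, and the value at (i, i) is
  1 + 2 m(i) (d_i - 1) / d_i.
\<close>

section \<open>Second-order Markov chains\<close>

fun chain_prob :: "('a \<Rightarrow> 'a \<Rightarrow> 'a \<Rightarrow> real) \<Rightarrow> 'a \<Rightarrow> 'a \<Rightarrow> 'a list \<Rightarrow> real" where
  "chain_prob K u v [] = 1"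
| "chain_prob K u v (w # ys) = K u v w * chain_prob K v w ys"

fun last_pair :: "'a \<Rightarrow> 'a \<Rightarrow> 'a list \<Rightarrow> 'a \<times> 'a" where
  "last_pair u v [] = (u, v)"
| "last_pair u v (w # ys) = last_pair v w ys"

definition length_lists :: "'a set \<Rightarrow> nat \<Rightarrow> 'a list set" where
  "length_lists X n = {ys. set ys \<subseteq> X \<and> length ys = n}"

lemma length_lists_0 [simp]: "length_lists X 0 = {[]}"
  by (auto simp: length_lists_def)

lemma sum_length_lists_Suc:
  assumes "finite X"
  shows "(\<Sum>ys\<in>length_lists X (Suc n). F ys) = (\<Sum>w\<in>X. \<Sum>ys\<in>length_lists X n. F (w # ys))"
proof -
  have "inj_on (\<lambda>(ys, w). w # ys) (length_lists X n \<times> X)"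
    by (auto simp: inj_on_def)
  then have "(\<Sum>ys\<in>length_lists X (Suc n). F ys) = (\<Sum>(ys, w)\<in>length_lists X n \<times> X. F (w # ys))"
    unfolding length_lists_def lists_length_Suc_eq by (simp add: sum.reindex case_prod_beta')
  also have "\<dots> = (\<Sum>w\<in>X. \<Sum>ys\<in>length_lists X n. F (w # ys))"
    by (simp add: sum.cartesian_product [symmetric] sum.swap [of _ X])
  finally show ?thesis .
qed

lemma chain_prob_nonneg: "(\<And>a b c. K a b c \<ge> 0) \<Longrightarrow> chain_prob K u v ys \<ge> 0"
  by (induction ys arbitrary: u v) auto

lemma last_pair_invariant:
  assumes step: "\<And>u v w. P u v \<Longrightarrow> w \<in> X \<Longrightarrow> K u v w \<noteq> 0 \<Longrightarrow> P v w"
  shows "P u v \<Longrightarrow> set ys \<subseteq> X \<Longrightarrow> chain_prob K u v ys \<noteq> 0 \<Longrightarrow> case_prod P (last_pair u v ys)"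
proof (induction ys arbitrary: u v)
  case (Cons w ys)
  then have "P v w"
    using step by auto
  with Cons show ?case
    by simp
qed simp

lemma first_step_solution_unfold:
  assumes fin: "finite X"
    and step: "\<And>u v w. P u v \<Longrightarrow> w \<in> X \<Longrightarrow> K u v w \<noteq> 0 \<Longrightarrow> P v w"
    and eq: "\<And>u v. P u v \<Longrightarrow> h u v = 1 + (\<Sum>w\<in>X. K u v w * h v w)"
    and "P u v"
  shows "h u v = (\<Sum>n<N. \<Sum>ys\<in>length_lists X n. chain_prob K u v ys)
                 + (\<Sum>ys\<in>length_lists X N. chain_prob K u v ys * case_prod h (last_pair u v ys))"
proof -
  define T where "T n u v = (\<Sum>ys\<in>length_lists X n. chain_prob K u v ys)" for n u v
  define R where
    "R n u v = (\<Sum>ys\<in>length_lists X n. chain_prob K u v ys * case_prod h (last_pair u v ys))"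
    for n u v
  have T_Suc: "T (Suc n) u v = (\<Sum>w\<in>X. K u v w * T n v w)" for n u v
    unfolding T_def by (simp add: sum_length_lists_Suc [OF fin] sum_distrib_left)
  have R_Suc: "R (Suc n) u v = (\<Sum>w\<in>X. K u v w * R n v w)" for n u v
    unfolding R_def by (simp add: sum_length_lists_Suc [OF fin] sum_distrib_left mult.assoc)
  have "h u v = (\<Sum>n<N. T n u v) + R N u v" if "P u v" for u v
    using that
  proof (induction N arbitrary: u v)
    case 0
    then show ?case
      by (simp add: R_def)
  next
    case (Suc N)
    have IH: "K u v w * h v w = K u v w * ((\<Sum>n<N. T n v w) + R N v w)" if "w \<in> X" for w
      using Suc.IH [OF step [OF Suc.prems that]] by (cases "K u v w = 0") auto
    have "h u v = 1 + (\<Sum>w\<in>X. K u v w * ((\<Sum>n<N. T n v w) + R N v w))"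
      using eq [OF Suc.prems] IH by simp
    also have "\<dots> = 1 + (\<Sum>n<N. T (Suc n) u v) + R (Suc N) u v"
      by (simp add: T_Suc R_Suc distrib_left sum.distrib sum_distrib_left sum.swap [of _ X])
    also have "\<dots> = (\<Sum>n<Suc N. T n u v) + R (Suc N) u v"
      by (subst sum.lessThan_Suc_shift) (simp add: T_def)
    finally show ?case .
  qed
  then show ?thesis
    using \<open>P u v\<close> by (simp add: T_def R_def)
qed

lemma unfold_remainder_bounds:
  assumes K_nonneg: "\<And>u v w. K u v w \<ge> 0"
    and step: "\<And>u v w. P u v \<Longrightarrow> w \<in> X \<Longrightarrow> K u v w \<noteq> 0 \<Longrightarrow> P v w"
    and h_bounds: "\<And>u v. P u v \<Longrightarrow> 0 \<le> h u v \<and> h u v \<le> B"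
    and "P u v"
  shows "0 \<le> (\<Sum>ys\<in>length_lists X n. chain_prob K u v ys * case_prod h (last_pair u v ys))
         \<and> (\<Sum>ys\<in>length_lists X n. chain_prob K u v ys * case_prod h (last_pair u v ys))
             \<le> B * (\<Sum>ys\<in>length_lists X n. chain_prob K u v ys)"
proof -
  have "0 \<le> chain_prob K u v ys * case_prod h (last_pair u v ys)
        \<and> chain_prob K u v ys * case_prod h (last_pair u v ys) \<le> B * chain_prob K u v ys"
    if "ys \<in> length_lists X n" for ys
  proof (cases "chain_prob K u v ys = 0")
    case False
    then have "case_prod P (last_pair u v ys)"
      using last_pair_invariant [where P = P and K = K, OF step \<open>P u v\<close>] that
      by (simp add: length_lists_def)
    then have "0 \<le> case_prod h (last_pair u v ys) \<and> case_prod h (last_pair u v ys) \<le> B"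
      using h_bounds by (auto split: prod.splits)
    moreover have "chain_prob K u v ys \<ge> 0"
      by (rule chain_prob_nonneg [OF K_nonneg])
    ultimately show ?thesis
      by (simp add: mult.commute [of B] mult_left_mono)
  qed simp
  then show ?thesis
    unfolding sum_distrib_left by (auto intro: sum_nonneg sum_mono)
qed

text \<open>The remainder of the N-fold unfolding is at most (max h) times the N-th tail probability,
  and the tail probabilities are summable since, by the same unfolding, their partial sums are at
  most h u v.\<close>
lemma bounded_solution_sums:
  assumes fin: "finite X"
    and K_nonneg: "\<And>u v w. K u v w \<ge> 0"
    and step: "\<And>u v w. P u v \<Longrightarrow> w \<in> X \<Longrightarrow> K u v w \<noteq> 0 \<Longrightarrow> P v w"
    and eq: "\<And>u v. P u v \<Longrightarrow> h u v = 1 + (\<Sum>w\<in>X. K u v w * h v w)"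
    and h_nonneg: "\<And>u v. P u v \<Longrightarrow> h u v \<ge> 0"
    and fin_P: "finite {(u, v). P u v}"
    and "P u v"
  shows "(\<lambda>n. \<Sum>ys\<in>length_lists X n. chain_prob K u v ys) sums h u v"
proof -
  define T where "T n = (\<Sum>ys\<in>length_lists X n. chain_prob K u v ys)" for n
  define R where
    "R n = (\<Sum>ys\<in>length_lists X n. chain_prob K u v ys * case_prod h (last_pair u v ys))" for n
  define B where "B = (\<Sum>s\<in>{(u, v). P u v}. case_prod h s)"
  have h_le_B: "case_prod h s \<le> B" if "case_prod P s" for s
    unfolding B_def using that h_nonneg
    by (intro member_le_sum [OF _ _ fin_P]) (auto split: prod.splits)
  have h_bounds: "0 \<le> h u' v' \<and> h u' v' \<le> B" if "P u' v'" for u' v'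
    using h_nonneg [OF that] h_le_B [of "(u', v')"] that by simp
  have R_bounds: "0 \<le> R n \<and> R n \<le> B * T n" for n
    unfolding R_def T_def
    by (rule unfold_remainder_bounds [where P = P and K = K and h = h,
          OF K_nonneg step h_bounds \<open>P u v\<close>])
  have unfold: "h u v = (\<Sum>n<N. T n) + R N" for N
    unfolding T_def R_def
    by (rule first_step_solution_unfold [where P = P and K = K and h = h, OF fin step eq \<open>P u v\<close>])
  have "summable T"
  proof (rule summableI_nonneg_bounded)
    show "0 \<le> T n" for n
      unfolding T_def by (intro sum_nonneg chain_prob_nonneg K_nonneg)
    show "(\<Sum>n<N. T n) \<le> h u v" for N
      using unfold [of N] R_bounds [of N] by linarith
  qed
  then have "(\<lambda>n. B * T n) \<longlonglongrightarrow> 0"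
    using tendsto_mult_right_zero summable_LIMSEQ_zero by blast
  then have "R \<longlonglongrightarrow> 0"
    by (rule Lim_null_comparison [rotated]) (use R_bounds in simp)
  then have "(\<lambda>N. h u v - R N) \<longlonglongrightarrow> h u v"
    using tendsto_diff [OF tendsto_const, of R 0 _ "h u v"] by simp
  moreover have "h u v - R N = (\<Sum>n<N. T n)" for N
    using unfold [of N] by simp
  ultimately show ?thesis
    unfolding sums_def T_def [symmetric] by simp
qed

section \<open>The begrudgingly backtracking walk as a second-order chain\<close>

lemma bb_step_nonneg: "bb_step E u v w \<ge> 0"
  by (simp add: bb_step_def)

lemma sum_bb_step_forward:
  assumes "finite X" and "nbrs E v - {u} \<noteq> {}"
  shows "(\<Sum>w\<in>X. bb_step E u v w * f w)
           = (\<Sum>w\<in>X \<inter> (nbrs E v - {u}). f w) / real (card (nbrs E v - {u}))"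
proof -
  have "(\<Sum>w\<in>X. bb_step E u v w * f w)
          = (\<Sum>w\<in>X. if w \<in> nbrs E v - {u} then f w / real (card (nbrs E v - {u})) else 0)"
    using assms(2) by (intro sum.cong) (auto simp: bb_step_def)
  also have "\<dots> = (\<Sum>w\<in>X \<inter> (nbrs E v - {u}). f w / real (card (nbrs E v - {u})))"
    by (simp add: sum.inter_restrict [OF assms(1)])
  also have "\<dots> = (\<Sum>w\<in>X \<inter> (nbrs E v - {u}). f w) / real (card (nbrs E v - {u}))"
    by (simp add: sum_divide_distrib)
  finally show ?thesis .
qed

lemma sum_bb_step_backtrack:
  assumes "finite X" and "nbrs E v - {u} = {}"
  shows "(\<Sum>w\<in>X. bb_step E u v w * f w) = (if u \<in> X then f u else 0)"
proof -
  have "(\<Sum>w\<in>X. bb_step E u v w * f w) = (\<Sum>w\<in>X. if w = u then f w else 0)"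
    using assms(2) by (intro sum.cong) (auto simp: bb_step_def)
  then show ?thesis
    using assms(1) by (simp add: sum.delta')
qed

lemma prod_nth_eq_chain_prob:
  "(\<Prod>m<length ys. K ((u # v # ys) ! m) ((u # v # ys) ! Suc m) ((u # v # ys) ! Suc (Suc m)))
     = chain_prob K u v ys"
proof (induction ys arbitrary: u v)
  case (Cons w ys)
  show ?case
    by (simp only: length_Cons prod.lessThan_Suc_shift) (simp add: Cons.IH [symmetric])
qed simp

text \<open>Without loops, the first step from v is distributed like a step of a walk that arrived
  at v from v itself, so (v, v) serves as initial state.\<close>
lemma path_prob_Cons_eq_chain_prob:
  assumes "v \<notin> nbrs E v" and "nbrs E v \<noteq> {}"
  shows "path_prob E (v # ys) = chain_prob (bb_step E) v v ys"
proof (cases ys)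
  case (Cons w zs)
  have "first_step E v w = bb_step E v v w"
    using assms by (simp add: first_step_def bb_step_def)
  then show ?thesis
    using prod_nth_eq_chain_prob [of "bb_step E" v w zs] by (simp add: path_prob_def Cons)
qed (simp add: path_prob_def)

lemma tail_prob_eq_chain_prob_sum:
  assumes "i \<in> V" and "i \<noteq> k" and "i \<notin> nbrs E i" and "nbrs E i \<noteq> {}"
  shows "tail_prob V E i k n = (\<Sum>ys\<in>length_lists (V - {k}) n. chain_prob (bb_step E) i i ys)"
proof -
  have "{xs. length xs = Suc n \<and> xs ! 0 = i \<and> set xs \<subseteq> V \<and> k \<notin> set xs}
          = (\<lambda>ys. i # ys) ` length_lists (V - {k}) n"
    using assms(1,2) by (auto simp: length_lists_def length_Suc_conv image_iff)
  then show ?thesis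
    unfolding tail_prob_def
    by (simp add: sum.reindex path_prob_Cons_eq_chain_prob [OF assms(3,4)])
qed

lemma access_time_eq_solution:
  assumes "finite V" and "i \<in> V" and "i \<noteq> k" and "i \<notin> nbrs E i" and "nbrs E i \<noteq> {}"
    and step: "\<And>u v w. P u v \<Longrightarrow> w \<in> V - {k} \<Longrightarrow> bb_step E u v w \<noteq> 0 \<Longrightarrow> P v w"
    and eq: "\<And>u v. P u v \<Longrightarrow> h u v = 1 + (\<Sum>w\<in>V - {k}. bb_step E u v w * h v w)"
    and h_nonneg: "\<And>u v. P u v \<Longrightarrow> h u v \<ge> 0"
    and fin_P: "finite {(u, v). P u v}"
    and "P i i"
  shows "access_time V E i k = ennreal (h i i)"
proof -
  have sums: "(\<lambda>n. tail_prob V E i k n) sums h i i"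
    unfolding tail_prob_eq_chain_prob_sum [OF assms(2-5)]
    by (rule bounded_solution_sums [where P = P and h = h,
          OF _ bb_step_nonneg step eq h_nonneg fin_P])
      (use assms in auto)
  have nonneg: "tail_prob V E i k n \<ge> 0" for n
    unfolding tail_prob_eq_chain_prob_sum [OF assms(2-5)]
    by (intro sum_nonneg chain_prob_nonneg bb_step_nonneg)
  show ?thesis
    unfolding access_time_def by (rule suminf_ennreal_eq [OF nonneg sums])
qed

lemma graph_edgeD:
  assumes "graph V E" and "{a, b} \<in> E"
  shows "a \<in> V" and "b \<in> V" and "a \<noteq> b"
  using assms by (auto simp: graph_def card_2_iff doubleton_eq_iff)

lemma is_walk_singleton: "is_walk E [v]"
  by (simp add: is_walk_def)

lemma is_walk_Cons_Cons: "is_walk E (v # w # ys) \<longleftrightarrow> {v, w} \<in> E \<and> is_walk E (w # ys)"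
proof -
  have "(\<forall>m. Suc m < length (v # w # ys) \<longrightarrow> P m)
          \<longleftrightarrow> P 0 \<and> (\<forall>m. Suc m < length (w # ys) \<longrightarrow> P (Suc m))" for P :: "nat \<Rightarrow> bool"
    by (auto simp: less_Suc_eq_0_disj)
  then show ?thesis
    unfolding is_walk_def by simp
qed

lemma is_walk_append:
  assumes "is_walk E xs" and "is_walk E ys" and "{last xs, hd ys} \<in> E"
  shows "is_walk E (xs @ ys)"
  unfolding is_walk_def
proof (intro conjI allI impI)
  fix m
  assume m: "Suc m < length (xs @ ys)"
  consider "Suc m < length xs" | "Suc m = length xs" | "Suc m > length xs"
    by linarith
  then show "{(xs @ ys) ! m, (xs @ ys) ! Suc m} \<in> E"
  proof cases
    case 1
    then show ?thesis
      using assms(1) by (simp add: is_walk_def nth_append)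
  next
    case 2
    then have "m = length xs - 1"
      by simp
    then show ?thesis
      using assms m by (simp add: is_walk_def nth_append last_conv_nth hd_conv_nth)
  next
    case 3
    then have "Suc (m - length xs) < length ys" "Suc m - length xs = Suc (m - length xs)"
      using m by auto
    then show ?thesis
      using assms(2) 3 by (simp add: is_walk_def nth_append)
  qed
qed (use assms(1) in \<open>simp add: is_walk_def\<close>)

lemma is_walk_rev:
  assumes "is_walk E xs"
  shows "is_walk E (rev xs)"
  unfolding is_walk_def
proof (intro conjI allI impI)
  fix m
  assume m: "Suc m < length (rev xs)"
  then have "Suc (length xs - Suc (Suc m)) < length xs"
    and "length xs - Suc m = Suc (length xs - Suc (Suc m))"
    by auto
  then show "{rev xs ! m, rev xs ! Suc m} \<in> E"
    using assms m by (auto simp: is_walk_def rev_nth insert_commute)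
qed (use assms in \<open>simp add: is_walk_def\<close>)

lemma walk_in_closed_set:
  assumes closed: "\<And>y z. y \<in> S \<Longrightarrow> {y, z} \<in> E \<Longrightarrow> z \<in> S"
  shows "is_walk E xs \<Longrightarrow> hd xs \<in> S \<Longrightarrow> set xs \<subseteq> S"
proof (induction xs rule: induct_list012)
  case (3 x y ys)
  then show ?case
    using closed by (auto simp: is_walk_Cons_Cons)
qed simp_all

lemma reachable_refl: "reachable E v v"
  unfolding reachable_def using is_walk_singleton by fastforce

lemma reachable_snoc:
  assumes "reachable E a b" and "{b, c} \<in> E"
  shows "reachable E a c"
proof -
  obtain xs where "is_walk E xs" "hd xs = a" "last xs = b"
    using assms(1) unfolding reachable_def by blast
  moreover from this have "xs \<noteq> []"
    by (simp add: is_walk_def)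
  moreover have "is_walk E (xs @ [c])"
    using is_walk_append [OF \<open>is_walk E xs\<close> is_walk_singleton] assms(2) \<open>last xs = b\<close> by simp
  ultimately show ?thesis
    unfolding reachable_def by (intro exI [of _ "xs @ [c]"]) simp
qed

lemma reachable_in_closed_set:
  assumes "\<And>y z. y \<in> S \<Longrightarrow> {y, z} \<in> E \<Longrightarrow> z \<in> S" and "reachable E a b" and "a \<in> S"
  shows "b \<in> S"
proof -
  obtain xs where xs: "is_walk E xs" "hd xs = a" "last xs = b"
    using assms(2) by (auto simp: reachable_def)
  then have "xs \<noteq> []"
    by (simp add: is_walk_def)
  have "set xs \<subseteq> S"
    using walk_in_closed_set [where S = S and E = E, OF assms(1) xs(1)] xs(2) assms(3) by simp
  then show ?thesis
    using last_in_set [OF \<open>xs \<noteq> []\<close>] xs(3) by blast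
qed

definition walk_dist :: "'a set set \<Rightarrow> 'a \<Rightarrow> 'a \<Rightarrow> nat" where
  "walk_dist E v r = (LEAST n. \<exists>xs. is_walk E xs \<and> hd xs = v \<and> last xs = r \<and> length xs = Suc n)"

lemma walk_dist_le:
  assumes "is_walk E xs" and "hd xs = v" and "last xs = r"
  shows "walk_dist E v r \<le> length xs - 1"
proof -
  have "xs \<noteq> []"
    using assms(1) by (simp add: is_walk_def)
  then have "\<exists>ys. is_walk E ys \<and> hd ys = v \<and> last ys = r \<and> length ys = Suc (length xs - 1)"
    using assms by auto
  then show ?thesis
    unfolding walk_dist_def by (rule Least_le)
qed

lemma shortest_walk:
  assumes "reachable E v r"
  obtains xs where "is_walk E xs" "hd xs = v" "last xs = r" "length xs = Suc (walk_dist E v r)"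
proof -
  obtain xs where "is_walk E xs" "hd xs = v" "last xs = r"
    using assms by (auto simp: reachable_def)
  moreover from this have "xs \<noteq> []"
    by (simp add: is_walk_def)
  ultimately have "\<exists>n xs. is_walk E xs \<and> hd xs = v \<and> last xs = r \<and> length xs = Suc n"
    by (intro exI [of _ "length xs - 1"] exI [of _ xs]) simp
  then have "\<exists>xs. is_walk E xs \<and> hd xs = v \<and> last xs = r \<and> length xs = Suc (walk_dist E v r)"
    unfolding walk_dist_def by (rule LeastI_ex)
  then show ?thesis
    using that by blast
qed

lemma walk_dist_self: "walk_dist E r r = 0"
  using walk_dist_le [OF is_walk_singleton [of E r]] by simp

lemma walk_dist_step:
  assumes "reachable E v r" and "v \<noteq> r"
  obtains w where "{v, w} \<in> E" and "walk_dist E v r = Suc (walk_dist E w r)"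
proof -
  obtain xs where xs: "is_walk E xs" "hd xs = v" "last xs = r" "length xs = Suc (walk_dist E v r)"
    using shortest_walk [OF assms(1)] .
  obtain w ys where xs_eq: "xs = v # w # ys"
  proof (cases xs)
    case (Cons a zs)
    then show ?thesis
      using that xs assms(2) by (cases zs) auto
  qed (use xs in simp)
  then have edge: "{v, w} \<in> E" and walk: "is_walk E (w # ys)"
    using xs(1) by (auto simp: is_walk_Cons_Cons)
  then have "walk_dist E w r \<le> walk_dist E v r - 1"
    using walk_dist_le [OF walk, of w r] xs xs_eq by simp
  moreover have "walk_dist E v r \<le> Suc (walk_dist E w r)"
  proof -
    have "reachable E w r"
      using walk xs xs_eq by (auto simp: reachable_def)
    then obtain zs where zs: "is_walk E zs" "hd zs = w" "last zs = r"
      "length zs = Suc (walk_dist E w r)"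
      by (rule shortest_walk)
    then obtain zs' where "zs = w # zs'"
      by (cases zs) auto
    then show ?thesis
      using walk_dist_le [of E "v # zs" v r] zs edge by (simp add: is_walk_Cons_Cons)
  qed
  moreover have "walk_dist E v r = Suc (length ys)"
    using xs(4) xs_eq by simp
  ultimately show ?thesis
    using that edge by simp
qed

section \<open>Rooting a tree\<close>

locale parent_map =
  fixes V :: "'a set" and E :: "'a set set" and r :: 'a
    and par :: "'a \<Rightarrow> 'a" and depth :: "'a \<Rightarrow> nat"
  assumes graph: "graph V E"
    and par_root: "par r = r"
    and depth_root: "depth r = 0"
    and parent_edge: "\<And>v. v \<in> V \<Longrightarrow> v \<noteq> r \<Longrightarrow> {v, par v} \<in> E"
    and depth_par: "\<And>v. v \<in> V \<Longrightarrow> v \<noteq> r \<Longrightarrow> depth v = Suc (depth (par v))"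
begin

lemma par_in_V: "v \<in> V \<Longrightarrow> par v \<in> V"
  using graph_edgeD(2) [OF graph parent_edge] par_root by (cases "v = r") auto

lemma par_ne_self: "v \<in> V \<Longrightarrow> v \<noteq> r \<Longrightarrow> par v \<noteq> v"
  using graph_edgeD(3) [OF graph parent_edge [of v]] by simp

lemma finite_V: "finite V"
  using graph by (simp add: graph_def)

lemma not_in_nbrs_self: "v \<notin> nbrs E v"
  using graph_edgeD(3) [OF graph, of v v] by (auto simp: nbrs_def)

lemma nbrs_subset_V: "nbrs E v \<subseteq> V"
  using graph_edgeD(1) [OF graph] by (auto simp: nbrs_def)

lemma funpow_par_in_V: "v \<in> V \<Longrightarrow> (par ^^ k) v \<in> V"
  by (induction k) (auto simp: par_in_V)

lemma funpow_par_root: "(par ^^ k) r = r"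
  by (induction k) (auto simp: par_root)

lemma depth_eq_0_iff: "v \<in> V \<Longrightarrow> depth v = 0 \<longleftrightarrow> v = r"
  using depth_par depth_root by fastforce

lemma depth_funpow_par: "v \<in> V \<Longrightarrow> depth ((par ^^ k) v) = depth v - k"
proof (induction k)
  case (Suc k)
  then show ?case
    using depth_par [OF funpow_par_in_V [OF Suc.prems, of k]]
    by (cases "(par ^^ k) v = r") (auto simp: par_root depth_root)
qed simp

lemma funpow_par_depth: "v \<in> V \<Longrightarrow> (par ^^ depth v) v = r"
  using depth_funpow_par [of v "depth v"] depth_eq_0_iff funpow_par_in_V by auto

lemma funpow_par_ge_depth:
  assumes "v \<in> V" and "depth v \<le> k"
  shows "(par ^^ k) v = r"
proof -
  have "(par ^^ k) v = (par ^^ (k - depth v)) ((par ^^ depth v) v)"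
    using assms(2) funpow_add [of "k - depth v" "depth v" par] by (simp add: fun_eq_iff)
  then show ?thesis
    using funpow_par_depth [OF assms(1)] funpow_par_root by simp
qed

lemma funpow_par_ne_root: "v \<in> V \<Longrightarrow> k < depth v \<Longrightarrow> (par ^^ k) v \<noteq> r"
  using depth_funpow_par [of v k] depth_root by auto

lemma funpow_par_neq: "v \<in> V \<Longrightarrow> k < l \<Longrightarrow> k < depth v \<Longrightarrow> (par ^^ k) v \<noteq> (par ^^ l) v"
  using depth_funpow_par [of v k] depth_funpow_par [of v l] by auto

definition ancestors :: "'a \<Rightarrow> nat \<Rightarrow> 'a list" where
  "ancestors v n = map (\<lambda>k. (par ^^ k) v) [0..<Suc n]"

lemma hd_ancestors [simp]: "hd (ancestors v n) = v"
  by (simp add: ancestors_def hd_map del: upt_Suc)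

lemma last_ancestors [simp]: "last (ancestors v n) = (par ^^ n) v"
  by (simp add: ancestors_def)

lemma length_ancestors [simp]: "length (ancestors v n) = Suc n"
  by (simp add: ancestors_def)

lemma ancestors_ne_Nil [simp]: "ancestors v n \<noteq> []"
  by (simp add: ancestors_def del: upt_Suc)

lemma set_ancestors: "set (ancestors v n) = (\<lambda>k. (par ^^ k) v) ` {..n}"
  by (auto simp: ancestors_def atLeast0AtMost simp del: upt_Suc)

lemma is_walk_ancestors:
  assumes "v \<in> V" and "n \<le> depth v"
  shows "is_walk E (ancestors v n)"
  unfolding is_walk_def
proof (intro conjI allI impI)
  fix m
  assume "Suc m < length (ancestors v n)"
  then have "m < depth v" "Suc m < Suc n"
    using assms(2) by auto
  then show "{ancestors v n ! m, ancestors v n ! Suc m} \<in> E"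
    using parent_edge [OF funpow_par_in_V [OF assms(1)] funpow_par_ne_root [OF assms(1)]]
    unfolding ancestors_def by (simp del: upt_Suc)
qed (simp add: ancestors_def)

lemma distinct_ancestors:
  assumes "v \<in> V" and "n \<le> depth v"
  shows "distinct (ancestors v n)"
proof -
  have "inj_on (\<lambda>k. (par ^^ k) v) {0..<Suc n}"
    by (rule linorder_inj_onI') (use assms funpow_par_neq in auto)
  then show ?thesis
    by (simp add: ancestors_def distinct_map del: upt_Suc)
qed

lemma first_common_ancestor:
  assumes "v \<in> V" and "w \<in> V"
  obtains p q where "(par ^^ p) v = (par ^^ q) w" and "p \<le> depth v" and "q \<le> depth w"
    and "\<And>k l. k < p \<Longrightarrow> (par ^^ k) v \<noteq> (par ^^ l) w"
    and "\<And>l. l < q \<Longrightarrow> (par ^^ l) w \<noteq> (par ^^ p) v"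
proof -
  have ex: "\<exists>q. (par ^^ depth v) v = (par ^^ q) w"
    using funpow_par_depth assms by metis
  define p where "p = (LEAST p. \<exists>q. (par ^^ p) v = (par ^^ q) w)"
  have "\<exists>q. (par ^^ p) v = (par ^^ q) w"
    unfolding p_def by (rule LeastI_ex) (use ex in blast)
  define q where "q = (LEAST q. (par ^^ p) v = (par ^^ q) w)"
  have meet: "(par ^^ p) v = (par ^^ q) w"
    unfolding q_def by (rule LeastI_ex) fact
  have p_le: "p \<le> depth v"
    unfolding p_def by (rule Least_le) (use ex in blast)
  have "(par ^^ p) v = (par ^^ min q (depth w)) w"
    using meet funpow_par_ge_depth [OF assms(2)] by (cases "q \<le> depth w") auto
  then have q_le: "q \<le> depth w"
    unfolding q_def by (metis (mono_tags, lifting) Least_le min.bounded_iff)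
  have p_min: "(par ^^ k) v \<noteq> (par ^^ l) w" if "k < p" for k l
    using not_less_Least [OF that [unfolded p_def]] by blast
  have q_min: "(par ^^ l) w \<noteq> (par ^^ p) v" if "l < q" for l
    using not_less_Least [OF that [unfolded q_def]] by auto
  show ?thesis
    by (rule that [OF meet p_le q_le p_min q_min])
qed

lemma is_cycle_two_ancestor_chains:
  assumes V: "v \<in> V" "w \<in> V" and "p \<le> depth v" and "0 < q" and "q \<le> depth w"
    and meet: "(par ^^ p) v = (par ^^ q) w"
    and apart: "\<And>k l. k \<le> p \<Longrightarrow> l < q \<Longrightarrow> (par ^^ k) v \<noteq> (par ^^ l) w"
    and "2 \<le> p + q" and edge: "{v, w} \<in> E"
  shows "is_cycle E (ancestors v p @ rev (ancestors w (q - 1)))"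
proof -
  define x where "x = (par ^^ (q - 1)) w"
  have "q - 1 < depth w"
    using \<open>0 < q\<close> \<open>q \<le> depth w\<close> by simp
  then have x: "x \<in> V" "x \<noteq> r"
    using funpow_par_in_V [OF V(2)] funpow_par_ne_root [OF V(2)] by (auto simp: x_def)
  have "par x = (par ^^ Suc (q - 1)) w"
    by (simp add: x_def)
  then have "par x = (par ^^ p) v"
    using \<open>0 < q\<close> meet by simp
  then have join: "{last (ancestors v p), hd (rev (ancestors w (q - 1)))} \<in> E"
    using parent_edge [OF x] by (simp add: x_def hd_rev insert_commute)
  have walk: "is_walk E (ancestors v p @ rev (ancestors w (q - 1)))"
    using is_walk_append [OF is_walk_ancestors is_walk_rev [OF is_walk_ancestors] join]
      V \<open>p \<le> depth v\<close> \<open>q \<le> depth w\<close> by simp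
  have "set (ancestors v p) \<inter> set (rev (ancestors w (q - 1))) = {}"
    using apart \<open>0 < q\<close> by (auto simp: set_ancestors)
  moreover have "length (ancestors v p @ rev (ancestors w (q - 1))) \<ge> 3"
    using \<open>2 \<le> p + q\<close> \<open>0 < q\<close> by auto
  moreover have "last (ancestors v p @ rev (ancestors w (q - 1))) = w"
    by (simp add: last_rev last_append)
  ultimately show ?thesis
    using walk distinct_ancestors V \<open>p \<le> depth v\<close> \<open>q \<le> depth w\<close> edge
    by (simp add: is_cycle_def insert_commute)
qed

text \<open>The two ancestor chains of the endpoints, up to their first common vertex, close up
  with the edge into a cycle.\<close>
lemma cycle_if_not_parent_edge:
  assumes edge: "{v, w} \<in> E"
    and not_parent: "\<not> ((v \<noteq> r \<and> w = par v) \<or> (w \<noteq> r \<and> v = par w))"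
  shows "\<exists>xs. is_cycle E xs"
proof -
  have V: "v \<in> V" "w \<in> V" and "v \<noteq> w"
    using graph_edgeD [OF graph edge] by auto
  obtain p q where meet: "(par ^^ p) v = (par ^^ q) w" and "p \<le> depth v" "q \<le> depth w"
    and p_min: "\<And>k l. k < p \<Longrightarrow> (par ^^ k) v \<noteq> (par ^^ l) w"
    and q_min: "\<And>l. l < q \<Longrightarrow> (par ^^ l) w \<noteq> (par ^^ p) v"
    using first_common_ancestor [OF V] by blast
  have "\<not> (p = 1 \<and> q = 0)"
  proof
    assume "p = 1 \<and> q = 0"
    then have "w = par v"
      using meet by simp
    then show False
      using not_parent \<open>v \<noteq> w\<close> par_root by auto
  qed
  moreover have "\<not> (p = 0 \<and> q = 1)"
  proof
    assume "p = 0 \<and> q = 1"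
    then have "v = par w" "w \<noteq> r"
      using meet \<open>q \<le> depth w\<close> depth_root by auto
    then show False
      using not_parent by simp
  qed
  moreover have "\<not> (p = 0 \<and> q = 0)"
  proof
    assume "p = 0 \<and> q = 0"
    then show False
      using meet \<open>v \<noteq> w\<close> by simp
  qed
  ultimately have "2 \<le> p + q"
    by linarith
  show ?thesis
  proof (cases "q = 0")
    case True
    then have "is_cycle E (ancestors v p)"
      using is_walk_ancestors distinct_ancestors V \<open>p \<le> depth v\<close> \<open>2 \<le> p + q\<close> meet edge
      by (simp add: is_cycle_def insert_commute)
    then show ?thesis ..
  next
    case False
    have "(par ^^ k) v \<noteq> (par ^^ l) w" if "k \<le> p" "l < q" for k l
      using p_min [of k l] q_min [of l] that by (cases "k < p") auto
    then show ?thesis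
      using is_cycle_two_ancestor_chains V \<open>p \<le> depth v\<close> \<open>q \<le> depth w\<close> False meet
        \<open>2 \<le> p + q\<close> edge
      by blast
  qed
qed

end

lemma parent_map_exists:
  assumes "graph V E" and "connected_graph V E" and "r \<in> V"
  shows "\<exists>par depth. parent_map V E r par depth"
proof -
  define depth where "depth v = walk_dist E v r" for v
  define par where "par v = (if v = r then r else SOME w. {v, w} \<in> E \<and> depth v = Suc (depth w))"
    for v
  have "{v, par v} \<in> E \<and> depth v = Suc (depth (par v))" if v: "v \<in> V" "v \<noteq> r" for v
  proof -
    have "reachable E v r"
      using assms v by (simp add: connected_graph_def)
    then obtain w where "{v, w} \<in> E \<and> depth v = Suc (depth w)"
      using walk_dist_step v(2) unfolding depth_def by metis
    then show ?thesis
      unfolding par_def if_not_P [OF v(2)] by (rule someI)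
  qed
  then have "parent_map V E r par depth"
    using assms by unfold_locales (auto simp: par_def depth_def walk_dist_self)
  then show ?thesis
    by blast
qed

locale rooted_tree = parent_map +
  assumes edge_cases: "\<And>v w. {v, w} \<in> E \<Longrightarrow> (v \<noteq> r \<and> w = par v) \<or> (w \<noteq> r \<and> v = par w)"

lemma tree_rooted_tree_exists:
  assumes "tree V E" and "r \<in> V"
  shows "\<exists>par depth. rooted_tree V E r par depth"
proof -
  obtain par depth where pm: "parent_map V E r par depth"
    using parent_map_exists [of V E r] assms by (auto simp: tree_def)
  have "(v \<noteq> r \<and> w = par v) \<or> (w \<noteq> r \<and> v = par w)" if "{v, w} \<in> E" for v w
    using parent_map.cycle_if_not_parent_edge [OF pm that] assms(1) by (auto simp: tree_def)
  then have "rooted_tree V E r par depth"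
    using pm by (simp add: rooted_tree_def rooted_tree_axioms_def)
  then show ?thesis
    by blast
qed

section \<open>Subtrees of a rooted tree\<close>

context rooted_tree
begin

definition children :: "'a \<Rightarrow> 'a set" where
  "children v = {c \<in> V. c \<noteq> r \<and> par c = v}"

definition subtree :: "'a \<Rightarrow> 'a set" where
  "subtree v = {x \<in> V. \<exists>k. (par ^^ k) x = v}"

definition descendants :: "'a \<Rightarrow> 'a set" where
  "descendants v = subtree v - {v}"

lemma finite_children: "finite (children v)"
  using finite_V by (simp add: children_def)

lemma finite_descendants: "finite (descendants v)"
  using finite_V by (simp add: descendants_def subtree_def)

lemma funpow_par_ne_self: "x \<in> V \<Longrightarrow> x \<noteq> r \<Longrightarrow> 0 < m \<Longrightarrow> (par ^^ m) x \<noteq> x"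
  using funpow_par_neq [of x 0 m] depth_eq_0_iff by fastforce

lemma par_par_ne: "v \<in> V \<Longrightarrow> v \<noteq> r \<Longrightarrow> par (par v) \<noteq> v"
  using funpow_par_ne_self [of v 2] by (simp add: numeral_2_eq_2)

lemma depth_child: "c \<in> children v \<Longrightarrow> depth c = Suc (depth v)"
  using depth_par by (auto simp: children_def)

lemma nbrs_eq:
  assumes "v \<in> V" and "v \<noteq> r"
  shows "nbrs E v = insert (par v) (children v)"
proof (intro set_eqI iffI)
  fix w
  assume "w \<in> nbrs E v"
  then have "{w, v} \<in> E"
    by (simp add: nbrs_def)
  then show "w \<in> insert (par v) (children v)"
    using edge_cases [of w v] graph_edgeD(1) [OF graph] by (auto simp: children_def)
next
  fix w
  assume "w \<in> insert (par v) (children v)"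
  then show "w \<in> nbrs E v"
    using parent_edge [OF assms] parent_edge [of w]
    by (auto simp: nbrs_def children_def insert_commute)
qed

lemma par_notin_children: "v \<in> V \<Longrightarrow> v \<noteq> r \<Longrightarrow> par v \<notin> children v"
  using par_par_ne by (auto simp: children_def)

lemma subtree_eq_insert: "v \<in> V \<Longrightarrow> subtree v = insert v (descendants v)"
  by (auto simp: subtree_def descendants_def intro: exI [of _ 0])

lemma descendants_eq_UN:
  assumes "v \<in> V" and "v \<noteq> r"
  shows "descendants v = (\<Union>c\<in>children v. subtree c)"
proof (intro set_eqI iffI)
  fix x
  assume "x \<in> descendants v"
  then obtain k where x: "x \<in> V" "x \<noteq> v" "(par ^^ k) x = v"
    by (auto simp: descendants_def subtree_def)
  then obtain k' where "k = Suc k'"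
    by (cases k) auto
  with x have "(par ^^ k') x \<in> children v"
    using funpow_par_in_V [OF x(1)] par_root assms(2) by (auto simp: children_def)
  then show "x \<in> (\<Union>c\<in>children v. subtree c)"
    using x(1) by (auto simp: subtree_def)
next
  fix x
  assume "x \<in> (\<Union>c\<in>children v. subtree c)"
  then obtain c k where "c \<in> children v" "x \<in> V" "(par ^^ k) x = c"
    by (auto simp: subtree_def)
  then have "x \<in> V" "(par ^^ Suc k) x = v"
    by (auto simp: children_def)
  moreover have "x \<noteq> v"
    using funpow_par_ne_self [OF assms, of "Suc k"] calculation by auto
  ultimately show "x \<in> descendants v"
    unfolding descendants_def subtree_def by blast
qed

lemma subtrees_disjoint:
  assumes "c \<in> children v" and "c' \<in> children v" and "c \<noteq> c'"
  shows "subtree c \<inter> subtree c' = {}"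
proof (rule ccontr)
  assume "subtree c \<inter> subtree c' \<noteq> {}"
  then obtain x k l where x: "x \<in> V" "(par ^^ k) x = c" "(par ^^ l) x = c'"
    by (auto simp: subtree_def)
  have "depth x - k = Suc (depth v)"
    using depth_funpow_par [OF x(1), of k] depth_child [OF assms(1)] x(2) by simp
  moreover have "depth x - l = Suc (depth v)"
    using depth_funpow_par [OF x(1), of l] depth_child [OF assms(2)] x(3) by simp
  ultimately have "k = l"
    by linarith
  then show False
    using x assms(3) by simp
qed

lemma card_subtree:
  assumes "v \<in> V"
  shows "card (subtree v) = Suc (card (descendants v))"
proof -
  have "v \<notin> descendants v"
    by (simp add: descendants_def)
  then show ?thesis
    using finite_descendants [of v] by (simp add: subtree_eq_insert [OF assms])
qed

lemma card_descendants:
  assumes "v \<in> V" and "v \<noteq> r"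
  shows "card (descendants v) = (\<Sum>c\<in>children v. Suc (card (descendants c)))"
proof -
  have "card (descendants v) = (\<Sum>c\<in>children v. card (subtree c))"
    unfolding descendants_eq_UN [OF assms]
  proof (rule card_UN_disjoint [OF finite_children])
    show "\<forall>c\<in>children v. finite (subtree c)"
      using finite_V by (simp add: subtree_def)
    show "\<forall>c\<in>children v. \<forall>c'\<in>children v. c \<noteq> c' \<longrightarrow> subtree c \<inter> subtree c' = {}"
      using subtrees_disjoint by blast
  qed
  also have "\<dots> = (\<Sum>c\<in>children v. Suc (card (descendants c)))"
    by (intro sum.cong) (auto simp: card_subtree children_def)
  finally show ?thesis .
qed

end

section \<open>Hitting times of the root\<close>

context rooted_tree
begin

text \<open>A state (u, v) means that the walk is at v, coming from u, and (v, v) is the start at v.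
  The values below are the expected numbers of steps from (par v, v) until the walk is back at
  par v (return_time), from (c, v) with c a child of v until it moves to par v (climb_time),
  from (v, par v) until it hits the root (exit_time), and from any state until it hits the root
  (edge_hit_time, hit_time).\<close>
definition return_time :: "'a \<Rightarrow> real" where
  "return_time v = 2 * real (card (descendants v)) + 1"

definition climb_time :: "'a \<Rightarrow> 'a \<Rightarrow> real" where
  "climb_time v c =
     1 + (2 * real (card (children v)) * real (card (descendants v))
          - 2 * (real (card (descendants c)) + 1)) / (real (card (children v)) + 1)"

definition exit_time :: "'a \<Rightarrow> real" where
  "exit_time v = (\<Sum>k<depth v - 1. climb_time (par ((par ^^ k) v)) ((par ^^ k) v))"

definition edge_hit_time :: "'a \<Rightarrow> 'a \<Rightarrow> real" where
  "edge_hit_time u v = (if u = par v then return_time v else climb_time v u) + exit_time v"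

definition hit_time :: "'a \<Rightarrow> 'a \<Rightarrow> real" where
  "hit_time u v =
     (if u = v then 1 + (\<Sum>w\<in>nbrs E v - {r}. edge_hit_time v w) / real (degree E v)
      else edge_hit_time u v)"

lemma exit_time_root_child: "v \<in> V \<Longrightarrow> v \<noteq> r \<Longrightarrow> par v = r \<Longrightarrow> exit_time v = 0"
  using depth_par [of v] depth_root by (simp add: exit_time_def)

lemma exit_time_par:
  assumes "v \<in> V" and "v \<noteq> r" and "par v \<noteq> r"
  shows "exit_time v = climb_time (par v) v + exit_time (par v)"
proof -
  have "depth v - 1 = Suc (depth (par v) - 1)"
    using depth_par [OF assms(1,2)] depth_par [OF par_in_V [OF assms(1)] assms(3)] by simp
  then show ?thesis
    unfolding exit_time_def
    by (simp only: sum.lessThan_Suc_shift) (simp add: funpow_Suc_right del: funpow.simps)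
qed

lemma hit_time_par:
  assumes "v \<in> V" and "v \<noteq> r" and "par v \<noteq> r"
  shows "hit_time v (par v) = exit_time v"
  using par_ne_self [OF assms(1,2)] par_par_ne [OF assms(1,2)] exit_time_par [OF assms]
  by (simp add: hit_time_def edge_hit_time_def)

lemma hit_time_child:
  assumes "v \<in> V" and "v \<noteq> r" and "c \<in> children v"
  shows "hit_time v c = return_time c + climb_time v c + exit_time v"
proof -
  have "c \<in> V" "c \<noteq> r" "par c = v"
    using assms(3) by (auto simp: children_def)
  then show ?thesis
    using par_ne_self [of c] exit_time_par [of c] assms(2)
    by (simp add: hit_time_def edge_hit_time_def)
qed

lemma sum_return_climb_time:
  assumes "v \<in> V" and "v \<noteq> r"
  shows "(\<Sum>c\<in>children v. return_time c + climb_time v c)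
           = 2 * real (card (children v)) * real (card (descendants v))"
proof -
  define k where "k = real (card (children v))"
  define n where "n = real (card (descendants v))"
  have desc: "(\<Sum>c\<in>children v. real (card (descendants c)) + 1) = n"
    unfolding n_def card_descendants [OF assms] by (simp add: add.commute)
  have "(\<Sum>c\<in>children v. return_time c)
          = (\<Sum>c\<in>children v. 2 * (real (card (descendants c)) + 1) - 1)"
    by (simp add: return_time_def algebra_simps)
  also have "\<dots> = 2 * n - k"
    by (simp only: sum_subtractf sum_distrib_left [symmetric] desc) (simp add: k_def)
  finally have return: "(\<Sum>c\<in>children v. return_time c) = 2 * n - k" .
  have "(\<Sum>c\<in>children v. 2 * k * n - 2 * (real (card (descendants c)) + 1))
          = k * (2 * k * n) - 2 * n"
    by (simp only: sum_subtractf sum_distrib_left [symmetric] desc) (simp add: k_def)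
  then have "(\<Sum>c\<in>children v. climb_time v c) = k + (k * (2 * k * n) - 2 * n) / (k + 1)"
    unfolding climb_time_def k_def [symmetric] n_def [symmetric]
    by (simp add: sum.distrib sum_divide_distrib [symmetric] k_def)
  also have "\<dots> = k + 2 * n * (k - 1)"
  proof -
    have "k * (2 * k * n) - 2 * n = 2 * n * (k - 1) * (k + 1)"
      by (simp add: algebra_simps)
    moreover have "k + 1 \<noteq> 0"
      by (simp add: k_def add_nonneg_eq_0_iff)
    ultimately show ?thesis
      by simp
  qed
  finally have climb: "(\<Sum>c\<in>children v. climb_time v c) = k + 2 * n * (k - 1)" .
  have "(\<Sum>c\<in>children v. return_time c + climb_time v c) = (2 * n - k) + (k + 2 * n * (k - 1))"
    by (simp add: sum.distrib return climb)
  also have "\<dots> = 2 * k * n"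
    by (simp add: algebra_simps)
  finally show ?thesis
    by (simp add: k_def n_def)
qed

lemma sum_hit_time_children:
  assumes "v \<in> V" and "v \<noteq> r"
  shows "(\<Sum>c\<in>children v. hit_time v c)
           = 2 * real (card (children v)) * real (card (descendants v))
             + real (card (children v)) * exit_time v"
  using sum_return_climb_time [OF assms] by (simp add: hit_time_child [OF assms] sum.distrib)

lemma climb_time_nonneg:
  assumes "v \<in> V" and "v \<noteq> r" and "c \<in> children v"
  shows "climb_time v c \<ge> 0"
proof -
  have "Suc (card (descendants c)) \<le> card (descendants v)"
    unfolding card_descendants [OF assms(1,2)]
    by (rule member_le_sum [OF assms(3) _ finite_children]) simp
  then have le_n: "real (card (descendants c)) + 1 \<le> real (card (descendants v))"
    by linarith
  have "card (children v) \<ge> 1"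
    using assms(3) finite_children [of v] card_gt_0_iff [of "children v"] by auto
  then have n_le:
    "real (card (descendants v)) \<le> real (card (children v)) * real (card (descendants v))"
    using mult_right_mono [of 1 "real (card (children v))" "real (card (descendants v))"] by simp
  have "2 * (real (card (descendants c)) + 1)
          \<le> 2 * (real (card (children v)) * real (card (descendants v)))"
    by (rule mult_left_mono [OF order_trans [OF le_n n_le]]) simp
  then show ?thesis
    by (simp add: climb_time_def mult.assoc)
qed

lemma exit_time_nonneg: "v \<in> V \<Longrightarrow> exit_time v \<ge> 0"
  unfolding exit_time_def
proof (rule sum_nonneg)
  fix k
  assume v: "v \<in> V" and "k \<in> {..<depth v - 1}"
  then have "k < depth v" "Suc k < depth v"
    by auto
  then have "(par ^^ k) v \<noteq> r" "par ((par ^^ k) v) \<noteq> r"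
    using funpow_par_ne_root [OF v, of k] funpow_par_ne_root [OF v, of "Suc k"] by auto
  then show "climb_time (par ((par ^^ k) v)) ((par ^^ k) v) \<ge> 0"
    using climb_time_nonneg funpow_par_in_V [OF v] par_in_V by (auto simp: children_def)
qed

definition walk_state :: "'a \<Rightarrow> 'a \<Rightarrow> bool" where
  "walk_state u v \<longleftrightarrow> v \<in> V \<and> v \<noteq> r \<and> (u = v \<or> {u, v} \<in> E)"

lemma edge_hit_time_nonneg:
  assumes "v \<in> V" and "v \<noteq> r" and "{u, v} \<in> E"
  shows "edge_hit_time u v \<ge> 0"
proof (cases "u = par v")
  case True
  then show ?thesis
    using exit_time_nonneg [OF assms(1)] by (simp add: edge_hit_time_def return_time_def)
next
  case False
  then have "u \<in> children v"
    using assms(3) nbrs_eq [OF assms(1,2)] by (auto simp: nbrs_def)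
  then show ?thesis
    using False climb_time_nonneg [OF assms(1,2)] exit_time_nonneg [OF assms(1)]
    by (simp add: edge_hit_time_def)
qed

lemma hit_time_nonneg:
  assumes "walk_state u v"
  shows "hit_time u v \<ge> 0"
proof (cases "u = v")
  case True
  have "(\<Sum>w\<in>nbrs E v - {r}. edge_hit_time v w) \<ge> 0"
    using graph_edgeD(1) [OF graph]
    by (intro sum_nonneg edge_hit_time_nonneg) (auto simp: nbrs_def insert_commute)
  then show ?thesis
    using True by (simp add: hit_time_def)
next
  case False
  then show ?thesis
    using assms edge_hit_time_nonneg by (simp add: walk_state_def hit_time_def)
qed

lemma walk_state_step:
  assumes "walk_state u v" and "w \<in> V - {r}" and "bb_step E u v w \<noteq> 0"
  shows "walk_state v w"
proof (cases "nbrs E v - {u} = {}")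
  case False
  then have "w \<in> nbrs E v"
    using assms(3) by (auto simp: bb_step_def split: if_splits)
  then show ?thesis
    using assms(2) by (auto simp: walk_state_def nbrs_def insert_commute)
next
  case True
  then have "w = u"
    using assms(3) by (auto simp: bb_step_def split: if_splits)
  moreover have "u \<noteq> v"
    using True assms(1) nbrs_eq par_ne_self by (auto simp: walk_state_def)
  ultimately show ?thesis
    using assms(1,2) by (auto simp: walk_state_def insert_commute)
qed

lemma hit_time_first_step_start:
  assumes "v \<in> V" and "v \<noteq> r"
  shows "hit_time v v = 1 + (\<Sum>w\<in>V - {r}. bb_step E v v w * hit_time v w)"
proof -
  have no_loop: "nbrs E v - {v} = nbrs E v"
    using not_in_nbrs_self [of v] by simp
  have "nbrs E v \<noteq> {}"
    using nbrs_eq [OF assms] by simp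
  then have "(\<Sum>w\<in>V - {r}. bb_step E v v w * hit_time v w)
               = (\<Sum>w\<in>(V - {r}) \<inter> nbrs E v. hit_time v w) / real (degree E v)"
    using sum_bb_step_forward [of "V - {r}" E v v "hit_time v", unfolded no_loop] finite_V
    by (simp add: degree_def)
  also have "(V - {r}) \<inter> nbrs E v = nbrs E v - {r}"
    using nbrs_subset_V by blast
  also have "(\<Sum>w\<in>nbrs E v - {r}. hit_time v w) = (\<Sum>w\<in>nbrs E v - {r}. edge_hit_time v w)"
    using not_in_nbrs_self by (intro sum.cong) (auto simp: hit_time_def)
  finally show ?thesis
    by (simp add: hit_time_def)
qed

lemma hit_time_first_step_down:
  assumes "v \<in> V" and "v \<noteq> r"
  shows "hit_time (par v) v = 1 + (\<Sum>w\<in>V - {r}. bb_step E (par v) v w * hit_time v w)"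
proof -
  have forward: "nbrs E v - {par v} = children v"
    using nbrs_eq [OF assms] par_notin_children [OF assms] by auto
  have lhs: "hit_time (par v) v = 2 * real (card (descendants v)) + 1 + exit_time v"
    using par_ne_self [OF assms] by (simp add: hit_time_def edge_hit_time_def return_time_def)
  show ?thesis
  proof (cases "children v = {}")
    case True
    have "card (descendants v) = 0"
      using card_descendants [OF assms] True by simp
    moreover have "(if par v \<in> V - {r} then hit_time v (par v) else 0) = exit_time v"
      using hit_time_par [OF assms] exit_time_root_child [OF assms] par_in_V [OF assms(1)] by auto
    ultimately show ?thesis
      using sum_bb_step_backtrack [of "V - {r}" E v "par v" "hit_time v"] finite_V forward True lhs
      by simp
  next
    case False
    then have "real (card (children v)) > 0"
      using finite_children by (simp add: card_gt_0_iff)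
    have "(V - {r}) \<inter> children v = children v"
      by (auto simp: children_def)
    then have "(\<Sum>w\<in>V - {r}. bb_step E (par v) v w * hit_time v w)
                 = (\<Sum>c\<in>children v. hit_time v c) / real (card (children v))"
      using sum_bb_step_forward [of "V - {r}" E v "par v" "hit_time v"] finite_V forward False
      by simp
    also have "\<dots> = real (card (children v)) * (2 * real (card (descendants v)) + exit_time v)
                      / real (card (children v))"
      by (simp add: sum_hit_time_children [OF assms] algebra_simps)
    also have "\<dots> = 2 * real (card (descendants v)) + exit_time v"
      using \<open>real (card (children v)) > 0\<close> by simp
    finally have "(\<Sum>w\<in>V - {r}. bb_step E (par v) v w * hit_time v w)
                    = 2 * real (card (descendants v)) + exit_time v" .
    then show ?thesis
      using lhs by simp
  qed
qed

text \<open>Together with sum_return_climb_time, this is the first-step equation in the state (c, v):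
  the walk moves to par v, or it enters another child c' and is back after return_time c' steps,
  in the state (c', v).\<close>
lemma climb_time_first_step:
  assumes "v \<in> V" and "v \<noteq> r" and "c \<in> children v"
  shows "real (card (children v)) * (climb_time v c - 1)
           = 2 * real (card (children v)) * real (card (descendants v))
             - return_time c - climb_time v c"
proof -
  have "real (card (children v)) + 1 \<noteq> 0"
    by (simp add: add_nonneg_eq_0_iff)
  then show ?thesis
    by (simp add: climb_time_def return_time_def field_simps)
qed

lemma nbrs_minus_child:
  assumes "v \<in> V" and "v \<noteq> r" and "c \<in> children v"
  shows "nbrs E v - {c} = insert (par v) (children v - {c})"
  using nbrs_eq [OF assms(1,2)] par_notin_children [OF assms(1,2)] assms(3) by auto

lemma card_nbrs_minus_child:
  assumes "v \<in> V" and "v \<noteq> r" and "c \<in> children v"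
  shows "card (nbrs E v - {c}) = card (children v)"
proof -
  have "card (children v) \<ge> 1"
    using assms(3) finite_children [of v] card_gt_0_iff [of "children v"] by auto
  then show ?thesis
    unfolding nbrs_minus_child [OF assms]
    using par_notin_children [OF assms(1,2)] finite_children assms(3)
    by (simp add: card_Diff_singleton)
qed

lemma sum_hit_time_nbrs_minus_child:
  assumes "v \<in> V" and "v \<noteq> r" and "c \<in> children v"
  shows "(\<Sum>w\<in>(V - {r}) \<inter> (nbrs E v - {c}). hit_time v w)
           = exit_time v + (\<Sum>c'\<in>children v. hit_time v c') - hit_time v c"
proof -
  have "(\<Sum>w\<in>(V - {r}) \<inter> (nbrs E v - {c}). hit_time v w)
          = exit_time v + (\<Sum>c'\<in>children v - {c}. hit_time v c')"
  proof (cases "par v = r")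
    case True
    then have "(V - {r}) \<inter> (nbrs E v - {c}) = children v - {c}"
      unfolding nbrs_minus_child [OF assms] by (auto simp: children_def)
    then show ?thesis
      using exit_time_root_child [OF assms(1,2) True] by simp
  next
    case False
    then have "(V - {r}) \<inter> (nbrs E v - {c}) = insert (par v) (children v - {c})"
      unfolding nbrs_minus_child [OF assms] using par_in_V [OF assms(1)]
      by (auto simp: children_def)
    then show ?thesis
      using hit_time_par [OF assms(1,2) False] par_notin_children [OF assms(1,2)] finite_children
      by simp
  qed
  then show ?thesis
    by (simp add: sum_diff1 finite_children assms(3))
qed

lemma hit_time_first_step_up:
  assumes "v \<in> V" and "v \<noteq> r" and "c \<in> children v"
  shows "hit_time c v = 1 + (\<Sum>w\<in>V - {r}. bb_step E c v w * hit_time v w)"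
proof -
  define k where "k = real (card (children v))"
  have "k > 0"
    using assms(3) finite_children [of v] by (auto simp: k_def card_gt_0_iff)
  have "nbrs E v - {c} \<noteq> {}"
    using nbrs_minus_child [OF assms] by simp
  then have "(\<Sum>w\<in>V - {r}. bb_step E c v w * hit_time v w)
               = (\<Sum>w\<in>(V - {r}) \<inter> (nbrs E v - {c}). hit_time v w) / k"
    by (simp add: sum_bb_step_forward finite_V card_nbrs_minus_child [OF assms] k_def)
  also have "\<dots> = (exit_time v + 2 * k * real (card (descendants v)) + k * exit_time v
                     - (return_time c + climb_time v c + exit_time v)) / k"
    by (simp add: sum_hit_time_nbrs_minus_child [OF assms] sum_hit_time_children [OF assms(1,2)]
        hit_time_child [OF assms] k_def)
  also have "\<dots> = climb_time v c - 1 + exit_time v"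
    using climb_time_first_step [OF assms] \<open>k > 0\<close> by (simp add: k_def field_simps)
  finally show ?thesis
    using assms(3) par_notin_children [OF assms(1,2)] par_ne_self [of c]
    by (auto simp: hit_time_def edge_hit_time_def children_def)
qed

lemma hit_time_first_step:
  assumes "walk_state u v"
  shows "hit_time u v = 1 + (\<Sum>w\<in>V - {r}. bb_step E u v w * hit_time v w)"
proof -
  have v: "v \<in> V" "v \<noteq> r"
    using assms by (auto simp: walk_state_def)
  consider "u = v" | "u = par v" | "u \<in> children v"
    using assms edge_cases [of u v] graph_edgeD(1) [OF graph, of u v]
    by (auto simp: walk_state_def children_def)
  then show ?thesis
    using hit_time_first_step_start [OF v] hit_time_first_step_down [OF v]
      hit_time_first_step_up [OF v]
    by cases auto
qed

lemma access_time_eq_hit_time: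
  assumes "v \<in> V" and "v \<noteq> r"
  shows "access_time V E v r = ennreal (hit_time v v)"
proof (rule access_time_eq_solution [where P = walk_state and h = hit_time])
  show "nbrs E v \<noteq> {}"
    using nbrs_eq [OF assms] by simp
  have "{(u, w). walk_state u w} \<subseteq> V \<times> V"
    using graph_edgeD(1) [OF graph] by (auto simp: walk_state_def)
  then show "finite {(u, w). walk_state u w}"
    using finite_subset finite_V by blast
  show "walk_state v v"
    using assms by (simp add: walk_state_def)
qed (use assms finite_V not_in_nbrs_self walk_state_step hit_time_first_step hit_time_nonneg
     in blast)+

lemma degree_child_of_root:
  assumes "i \<in> children r"
  shows "degree E i = Suc (card (children i))"
proof -
  have "i \<in> V" "i \<noteq> r" "par i = r"
    using assms by (auto simp: children_def)
  moreover have "r \<notin> children i"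
    by (simp add: children_def)
  ultimately show ?thesis
    using finite_children by (simp add: degree_def nbrs_eq)
qed

lemma hit_time_child_of_root:
  assumes "i \<in> children r"
  shows "hit_time i i = 1 + 2 * real (card (descendants i)) * real (card (children i))
                              / (real (card (children i)) + 1)"
proof -
  have i: "i \<in> V" "i \<noteq> r" "par i = r"
    using assms by (auto simp: children_def)
  then have "nbrs E i - {r} = children i"
    by (auto simp: nbrs_eq children_def)
  moreover have "edge_hit_time i c = hit_time i c" if "c \<in> children i" for c
    using that par_ne_self by (auto simp: hit_time_def children_def)
  ultimately have "(\<Sum>w\<in>nbrs E i - {r}. edge_hit_time i w)
                     = 2 * real (card (children i)) * real (card (descendants i))"
    using sum_hit_time_children [OF i(1,2)] exit_time_root_child [OF i] by simp
  then show ?thesis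
    using degree_child_of_root [OF assms] by (simp add: hit_time_def algebra_simps)
qed

end

section \<open>The component of a child of the root\<close>

context rooted_tree
begin

lemma subtree_closed:
  assumes "i \<in> children r" and "y \<in> subtree i" and "{y, z} \<in> E - {{i, r}}"
  shows "z \<in> subtree i"
proof -
  obtain k where y: "y \<in> V" "(par ^^ k) y = i"
    using assms(2) by (auto simp: subtree_def)
  have "z \<in> V" and i: "i \<noteq> r" "par i = r"
    using graph_edgeD(2) [OF graph] assms by (auto simp: children_def)
  consider "y \<noteq> r" "z = par y" | "z \<noteq> r" "y = par z"
    using edge_cases assms(3) by blast
  then show ?thesis
  proof cases
    case 1
    then obtain k' where "k = Suc k'"
      using y i assms(3) by (cases k) auto
    then have "(par ^^ k') z = i"
      using y 1 by (simp add: funpow_Suc_right del: funpow.simps)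
    then show ?thesis
      using \<open>z \<in> V\<close> by (auto simp: subtree_def)
  next
    case 2
    then have "(par ^^ Suc k) z = i"
      using y by (simp add: funpow_Suc_right del: funpow.simps)
    then show ?thesis
      using \<open>z \<in> V\<close> unfolding subtree_def by blast
  qed
qed

lemma comp_vertices_child_of_root:
  assumes "i \<in> children r"
  shows "comp_vertices V E i r = subtree i"
proof (intro set_eqI iffI)
  fix x
  assume "x \<in> comp_vertices V E i r"
  then have "reachable (E - {{i, r}}) i x"
    by (simp add: comp_vertices_def)
  moreover have "i \<in> subtree i"
    using assms by (auto simp: subtree_def children_def intro: exI [of _ 0])
  ultimately show "x \<in> subtree i"
    by (rule reachable_in_closed_set [rotated]) (rule subtree_closed [OF assms])
next
  fix x
  assume "x \<in> subtree i"
  then obtain k where x: "x \<in> V" "(par ^^ k) x = i"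
    by (auto simp: subtree_def)
  then have "reachable (E - {{i, r}}) i x"
  proof (induction k arbitrary: x)
    case 0
    then show ?case
      by (simp add: reachable_refl)
  next
    case (Suc k)
    have i: "i \<in> V" "i \<noteq> r"
      using assms by (auto simp: children_def)
    have "x \<noteq> r"
      using Suc.prems(2) funpow_par_root [of "Suc k"] i(2) by (auto simp del: funpow.simps)
    moreover have "x \<noteq> i"
      using Suc.prems(2) funpow_par_ne_self [OF i, of "Suc k"] by auto
    ultimately have "{par x, x} \<in> E - {{i, r}}"
      using parent_edge [OF Suc.prems(1)] by (auto simp: insert_commute doubleton_eq_iff)
    moreover have "reachable (E - {{i, r}}) i (par x)"
      using Suc.IH [OF par_in_V [OF Suc.prems(1)]] Suc.prems(2)
      by (simp add: funpow_Suc_right del: funpow.simps)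
    ultimately show ?case
      by (rule reachable_snoc [rotated])
  qed
  then show "x \<in> comp_vertices V E i r"
    using x(1) by (simp add: comp_vertices_def)
qed

lemma comp_edges_child_of_root:
  assumes "i \<in> children r"
  shows "comp_edges V E i r = (\<lambda>x. {x, par x}) ` descendants i"
proof (intro set_eqI iffI)
  fix e
  assume "e \<in> comp_edges V E i r"
  then have e: "e \<in> E" "e \<noteq> {i, r}" "e \<subseteq> subtree i"
    by (auto simp: comp_edges_def comp_vertices_child_of_root [OF assms])
  obtain a b where ab: "e = {a, b}"
    using e(1) graph unfolding graph_def by (meson card_2_iff)
  then consider "a \<noteq> r" "e = {a, par a}" | "b \<noteq> r" "e = {b, par b}"
    using edge_cases [of a b] e(1) by (auto simp: insert_commute)
  then show "e \<in> (\<lambda>x. {x, par x}) ` descendants i"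
  proof cases
    case 1
    then have "a \<noteq> i"
      using e(2) assms by (auto simp: children_def)
    then show ?thesis
      using 1 e(3) ab by (auto simp: descendants_def)
  next
    case 2
    then have "b \<noteq> i"
      using e(2) assms by (auto simp: children_def insert_commute)
    then show ?thesis
      using 2 e(3) ab by (auto simp: descendants_def)
  qed
next
  fix e
  assume "e \<in> (\<lambda>x. {x, par x}) ` descendants i"
  then obtain x where x: "x \<in> descendants i" and e: "e = {x, par x}"
    by blast
  then have "x \<in> V" "x \<noteq> i" "x \<noteq> r" "x \<in> subtree i"
    using assms funpow_par_root by (auto simp: descendants_def subtree_def children_def)
  moreover have "{x, par x} \<noteq> {i, r}"
    using \<open>x \<noteq> i\<close> \<open>x \<noteq> r\<close> by (auto simp: doubleton_eq_iff)
  moreover have "par x \<in> subtree i"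
    using subtree_closed [OF assms \<open>x \<in> subtree i\<close>] parent_edge calculation by blast
  ultimately show "e \<in> comp_edges V E i r"
    using e parent_edge by (simp add: comp_edges_def comp_vertices_child_of_root [OF assms])
qed

lemma card_comp_edges_child_of_root:
  assumes "i \<in> children r"
  shows "card (comp_edges V E i r) = card (descendants i)"
proof -
  have "inj_on (\<lambda>x. {x, par x}) (descendants i)"
  proof (rule inj_onI)
    fix x y
    assume "x \<in> descendants i" "y \<in> descendants i" and eq: "{x, par x} = {y, par y}"
    then have "x \<in> V" "x \<noteq> r"
      using assms funpow_par_root by (auto simp: descendants_def subtree_def children_def)
    show "x = y"
    proof (rule ccontr)
      assume "x \<noteq> y"
      then have "x = par y" "y = par x"
        using eq by (auto simp: doubleton_eq_iff)
      then show False
        using par_par_ne [OF \<open>x \<in> V\<close> \<open>x \<noteq> r\<close>] by simp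
    qed
  qed
  then show ?thesis
    unfolding comp_edges_child_of_root [OF assms] by (rule card_image)
qed

end

theorem lemma7:
  fixes V :: "'a set" and E :: "'a set set" and i j :: 'a
  assumes "tree V E"
    and "{i, j} \<in> E"
  shows "access_time V E i j =
           ennreal (1 + 2 * real (card (comp_edges V E i j)) *
                    (real (degree E i) - 1) / real (degree E i))"
proof -
  have "j \<in> V"
    using assms by (auto simp: tree_def graph_def)
  then obtain par depth where "rooted_tree V E j par depth"
    using tree_rooted_tree_exists [OF assms(1)] by blast
  then interpret rooted_tree V E j par depth .
  have "i \<noteq> j" "par i = j"
    using edge_cases [OF assms(2)] by auto
  then have i: "i \<in> children j"
    unfolding children_def using graph_edgeD(1) [OF graph assms(2)] by simp
  then have "access_time V E i j = ennreal (hit_time i i)"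
    by (intro access_time_eq_hit_time) (auto simp: children_def)
  also have "hit_time i i = 1 + 2 * real (card (comp_edges V E i j)) *
                              (real (degree E i) - 1) / real (degree E i)"
    by (simp add: hit_time_child_of_root [OF i] card_comp_edges_child_of_root [OF i]
        degree_child_of_root [OF i] algebra_simps)
  finally show ?thesis .
qed

end
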